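(* Let $F$ be a commutative field, $1\le h\le n-1$, and let $K$ be a linear complex of $h$-subspaces in $\mathrm{PG}(n,F)$. Then the set of all singular $(h-1)$-subspaces of $K$ equals $(\mathcal G_{n,h-1}\cap W)^{\wp_{n,h-1}^{-1}}$ for some subspace $W$ of $\mathrm{PG}\big(\binom{n+1}{h}-1,F\big)$ with $\binom{n+1}{h}-(n+2)\le\dim W\le\binom{n+1}{h}-(h+2)$.
   Context: A $d$-subspace is a projective subspace of dimension $d$. For $0\le k\le n-1$, $\wp_{n,k}$ denotes the Plücker embedding sending the $k$-subspace spanned by independent $v_0,\dots,v_k\in F^{n+1}$ to $F(v_0\wedge\cdots\wedge v_k)$ in $\mathrm{PG}\big(\binom{n+1}{k+1}-1,F\big)=\mathbb P(\bigwedge^{k+1}F^{n+1})$; its image is the Grassmann variety $\mathcal G_{n,k}$. A linear complex of $h$-subspaces is the set of $h$-subspaces whose image under $\wp_{n,h}$ lies in a fixed hyperplane of $\mathrm{PG}\big(\binom{n+1}{h+1}-1,F\big)$. An $(h-1)$-subspace $U$ is singular for $K$ if every $h$-subspace containing $U$ belongs to $K$. *)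

theory Defs
  imports Complex_Main "HOL-Library.Function_Algebras" "HOL-Combinatorics.Permutations"
begin

text \<open>Vectors of F^{n+1} are functions nat => F vanishing outside {0..n};
 Pluecker coordinates are functions (nat set) => F vanishing outside the
 (k+1)-subsets of {0..n}.\<close>

definition fscale :: "'a::field \<Rightarrow> ('b \<Rightarrow> 'a) \<Rightarrow> ('b \<Rightarrow> 'a)" where
  "fscale c f = (\<lambda>i. c * f i)"

interpretation fsp: vector_space "fscale :: 'a::field \<Rightarrow> ('b \<Rightarrow> 'a) \<Rightarrow> ('b \<Rightarrow> 'a)"
  by unfold_locales (auto simp: fscale_def algebra_simps)

definition ambient :: "nat \<Rightarrow> (nat \<Rightarrow> 'a::field) set" where
  "ambient n = {v. \<forall>i>n. v i = 0}"

text \<open>A projective d-subspace of PG(n,F), represented by the corresponding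
 (d+1)-dimensional linear subspace of F^{n+1}.\<close>
definition proj_subspace :: "nat \<Rightarrow> nat \<Rightarrow> (nat \<Rightarrow> 'a::field) set \<Rightarrow> bool" where
  "proj_subspace n d U \<longleftrightarrow> fsp.subspace U \<and> U \<subseteq> ambient n \<and> fsp.dim U = d + 1"

text \<open>The vector space underlying PG(binom(n+1,k+1)-1,F) = P(wedge^{k+1} F^{n+1}),
 with coordinates indexed by the (k+1)-subsets of {0..n}.\<close>
definition pl_space :: "nat \<Rightarrow> nat \<Rightarrow> (nat set \<Rightarrow> 'a::field) set" where
  "pl_space n k = {x. \<forall>S. x S \<noteq> 0 \<longrightarrow> S \<subseteq> {..n} \<and> card S = k + 1}"

text \<open>Coordinates of v_0 wedge ... wedge v_k: the coordinate at S = {s_0 < ... < s_k}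
 is the determinant of the minor with columns s_0,...,s_k (Leibniz formula).\<close>
definition wedge :: "nat \<Rightarrow> (nat \<Rightarrow> 'a::field) list \<Rightarrow> nat set \<Rightarrow> 'a" where
  "wedge n vs S = (if S \<subseteq> {..n} \<and> card S = length vs then
      (\<Sum>p\<in>{p. p permutes {..<length vs}}. of_int (sign p) *
         (\<Prod>i<length vs. (vs ! i) (sorted_list_of_set S ! p i)))
    else 0)"

definition pluecker :: "nat \<Rightarrow> nat \<Rightarrow> (nat \<Rightarrow> 'a::field) set \<Rightarrow> (nat set \<Rightarrow> 'a) set" where
  "pluecker n k U = fsp.span {wedge n (SOME vs. length vs = k + 1 \<and> distinct vs \<and>
       fsp.independent (set vs) \<and> fsp.span (set vs) = U)}"

definition pl_hyperplane :: "nat \<Rightarrow> nat \<Rightarrow> (nat set \<Rightarrow> 'a::field) set \<Rightarrow> bool" where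
  "pl_hyperplane n k H \<longleftrightarrow> fsp.subspace H \<and> H \<subseteq> pl_space n k \<and>
     fsp.dim H = (n + 1 choose (k + 1)) - 1"

definition linear_complex :: "nat \<Rightarrow> nat \<Rightarrow> (nat \<Rightarrow> 'a::field) set set \<Rightarrow> bool" where
  "linear_complex n h K \<longleftrightarrow> (\<exists>H. pl_hyperplane n h H \<and>
     K = {U. proj_subspace n h U \<and> pluecker n h U \<subseteq> H})"

definition singular :: "nat \<Rightarrow> nat \<Rightarrow> (nat \<Rightarrow> 'a::field) set set \<Rightarrow> (nat \<Rightarrow> 'a) set \<Rightarrow> bool" where
  "singular n h K U \<longleftrightarrow> proj_subspace n (h - 1) U \<and>
     (\<forall>V. proj_subspace n h V \<and> U \<subseteq> V \<longrightarrow> V \<in> K)"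

end

theory Submission
  imports Defs "Jordan_Normal_Form.Determinant"
begin

text \<open>Write the hyperplane of the complex as the kernel of a linear form \<open>c\<close> on the
  \<open>(h+1)\<close>-th exterior power of \<open>F\<^sup>n\<^sup>+\<^sup>1\<close>. For an \<open>(h-1)\<close>-subspace \<open>U\<close> with basis
  \<open>u\<^sub>1, \<dots>, u\<^sub>h\<close> and a vector \<open>v\<close>, the wedge \<open>u\<^sub>1 \<and> \<dots> \<and> u\<^sub>h \<and> v\<close> vanishes if \<open>v \<in> U\<close> and
  otherwise represents the \<open>h\<close>-subspace spanned by \<open>U\<close> and \<open>v\<close>; every \<open>h\<close>-subspace through
  \<open>U\<close> arises this way. Hence \<open>U\<close> is singular iff \<open>c(x \<and> v) = 0\<close> for all \<open>v\<close>, where \<open>x\<close> is the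
  Pluecker vector of \<open>U\<close>, i.e. iff \<open>x\<close> lies in \<open>W = {x. c(x \<and> e\<^sub>j) = 0 for j = 0..n}\<close>.
  These are \<open>n+1\<close> linear conditions, which gives the lower bound on \<open>dim W\<close>. For the upper
  bound pick an \<open>(h+1)\<close>-set \<open>T\<close> with \<open>c(e\<^sub>T) \<noteq> 0\<close>: on the unit vectors \<open>e\<^sub>T\<^sub>-\<^sub>{\<^sub>t\<^sub>}\<close>,
  \<open>t \<in> T\<close>, the \<open>h+1\<close> conditions with \<open>j \<in> T\<close> form a diagonal system, so they are
  independent.\<close>

lemma sum_fun_apply: "(\<Sum>i\<in>A. f i) x = (\<Sum>i\<in>A. f i x)"
  by (induction A rule: infinite_finite_induct) auto

lemma fscale_apply: "fscale c f x = c * f x"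
  by (simp add: fscale_def)

lemma module_hom_fscale_multI:
  fixes l :: "('b \<Rightarrow> 'a::field) \<Rightarrow> 'a"
  assumes "\<And>x y. l (x + y) = l x + l y" and "\<And>c x. l (fscale c x) = c * l x"
  shows "module_hom fscale (*) l"
  by unfold_locales (auto simp: algebra_simps fscale_def assms(1) assms(2)[unfolded fscale_def])

lemma subspace_kernels:
  assumes "fsp.subspace S" and "\<And>j. module_hom fscale (*) (l j)"
  shows "fsp.subspace {x\<in>S. \<forall>j<m. l j x = 0}"
  using assms(1) unfolding fsp.subspace_def
  by (auto simp: module_hom.zero[OF assms(2)] module_hom.add[OF assms(2)]
      module_hom.scale[OF assms(2)])

text \<open>The pointwise function space is infinite-dimensional, so dimension counts are carried out
  inside sets spanned by finitely many vectors.\<close>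

definition finite_dim :: "('b \<Rightarrow> 'a::field) set \<Rightarrow> bool" where
  "finite_dim V \<longleftrightarrow> (\<exists>F. finite F \<and> V \<subseteq> fsp.span F)"

lemma finite_dim_subset: "finite_dim W \<Longrightarrow> V \<subseteq> W \<Longrightarrow> finite_dim V"
  unfolding finite_dim_def by blast

lemma dim_subset_finite_dim:
  assumes "finite_dim W" "V \<subseteq> W"
  shows "fsp.dim V \<le> fsp.dim W"
proof -
  obtain F where F: "finite F" "W \<subseteq> fsp.span F" using assms(1) finite_dim_def by blast
  obtain B where B: "B \<subseteq> W" "fsp.independent B" "W \<subseteq> fsp.span B"
    using fsp.maximal_independent_subset by blast
  have "finite B" using fsp.independent_span_bound[OF F(1) B(2)] B(1) F(2) by blast
  moreover have "fsp.dim W = card B" using fsp.basis_card_eq_dim[OF B(1) B(3) B(2)] by simp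
  moreover have "V \<subseteq> fsp.span B" using assms(2) B(3) by blast
  ultimately show ?thesis using fsp.dim_le_card by metis
qed

lemma dim_insert_finite_dim:
  assumes "finite_dim S" "x \<notin> fsp.span S"
  shows "fsp.dim (insert x S) = fsp.dim S + 1"
proof -
  obtain F where F: "finite F" "S \<subseteq> fsp.span F" using assms(1) finite_dim_def by blast
  obtain B where B: "B \<subseteq> fsp.span S" "fsp.independent B" "fsp.span S \<subseteq> fsp.span B"
    "card B = fsp.dim (fsp.span S)"
    using fsp.basis_exists [of "fsp.span S"] by blast
  have "fsp.span S \<subseteq> fsp.span F" using F(2) by (meson fsp.span_minimal fsp.subspace_span)
  then have "finite B" using fsp.independent_span_bound[OF F(1) B(2)] B(1) by blast
  have "fsp.dim (fsp.span (insert x S)) = Suc (fsp.dim S)"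
  proof (rule fsp.dim_unique)
    show "insert x B \<subseteq> fsp.span (insert x S)"
      by (meson B(1) insertI1 insert_subset order_trans fsp.span_base fsp.span_mono subset_insertI)
    show "fsp.span (insert x S) \<subseteq> fsp.span (insert x B)"
      by (metis B(1,3) fsp.span_breakdown_eq fsp.span_subspace subsetI fsp.subspace_span)
    show "fsp.independent (insert x B)"
      by (metis B(1-3) fsp.independent_insert fsp.span_subspace fsp.subspace_span assms(2))
    show "card (insert x B) = Suc (fsp.dim S)"
      using B assms(2) \<open>finite B\<close> by (metis card_insert_disjoint fsp.dim_span fsp.span_base in_mono)
  qed
  then show ?thesis by simp
qed

lemma dim_kernel_functional:
  assumes S: "fsp.subspace S" "finite_dim S" and l: "module_hom fscale (*) l"
    and s: "s \<in> S" "l s \<noteq> 0"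
  shows "fsp.dim S = fsp.dim {x\<in>S. l x = 0} + 1"
proof -
  let ?S0 = "{x\<in>S. l x = 0}"
  have "fsp.subspace ?S0"
    using S(1) unfolding fsp.subspace_def
    by (auto simp: module_hom.zero[OF l] module_hom.add[OF l] module_hom.scale[OF l])
  then have span_S0: "fsp.span ?S0 = ?S0" by simp
  have "s \<notin> fsp.span ?S0" unfolding span_S0 using s(2) by simp
  moreover have "finite_dim ?S0" by (rule finite_dim_subset[OF S(2)]) auto
  ultimately have "fsp.dim (insert s ?S0) = fsp.dim ?S0 + 1"
    by (intro dim_insert_finite_dim)
  moreover have "fsp.span (insert s ?S0) = S"
  proof
    show "fsp.span (insert s ?S0) \<subseteq> S" using s(1) S(1) by (intro fsp.span_minimal) auto
    show "S \<subseteq> fsp.span (insert s ?S0)"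
    proof
      fix x assume x: "x \<in> S"
      let ?k = "l x / l s"
      have "x - fscale ?k s \<in> ?S0"
        using x s S(1) by (simp add: fsp.subspace_diff fsp.subspace_scale
            module_hom.diff[OF l] module_hom.scale[OF l])
      then show "x \<in> fsp.span (insert s ?S0)"
        unfolding fsp.span_breakdown_eq by (intro exI[of _ ?k] fsp.span_base)
    qed
  qed
  ultimately show ?thesis using fsp.dim_span[of "insert s ?S0"] by simp
qed

lemma dim_le_dim_kernels:
  assumes S: "fsp.subspace S" "finite_dim S" and l: "\<And>j. module_hom fscale (*) (l j)"
  shows "fsp.dim S \<le> fsp.dim {x\<in>S. \<forall>j<m. l j x = 0} + m"
proof (induction m)
  case (Suc m)
  let ?S = "{x\<in>S. \<forall>j<m. l j x = 0}"
  have eq: "{x\<in>S. \<forall>j<Suc m. l j x = 0} = {x\<in>?S. l m x = 0}" by (auto simp: less_Suc_eq)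
  have "fsp.dim ?S \<le> fsp.dim {x\<in>?S. l m x = 0} + 1"
  proof (cases "\<exists>s\<in>?S. l m s \<noteq> 0")
    case True
    then obtain s where s: "s \<in> ?S" "l m s \<noteq> 0" by blast
    have "finite_dim ?S" by (rule finite_dim_subset[OF S(2)]) auto
    from dim_kernel_functional[of ?S "l m" s, OF subspace_kernels[OF S(1) l] this l s]
    have "fsp.dim ?S = fsp.dim {x\<in>?S. l m x = 0} + 1" .
    then show ?thesis by simp
  next
    case False
    then have "{x\<in>?S. l m x = 0} = ?S" by auto
    then show ?thesis by simp
  qed
  then show ?case unfolding eq using Suc.IH by simp
qed simp

lemma dim_kernels_triangular:
  assumes S: "fsp.subspace S" "finite_dim S" and l: "\<And>j. module_hom fscale (*) (l j)"
    and triangular: "\<And>i. i < m \<Longrightarrow> \<exists>s\<in>S. (\<forall>j<i. l j s = 0) \<and> l i s \<noteq> 0"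
  shows "fsp.dim S = fsp.dim {x\<in>S. \<forall>j<m. l j x = 0} + m"
  using triangular
proof (induction m)
  case (Suc m)
  let ?S = "{x\<in>S. \<forall>j<m. l j x = 0}"
  have eq: "{x\<in>S. \<forall>j<Suc m. l j x = 0} = {x\<in>?S. l m x = 0}" by (auto simp: less_Suc_eq)
  obtain s where s: "s \<in> ?S" "l m s \<noteq> 0" using Suc.prems[of m] by auto
  have "finite_dim ?S" by (rule finite_dim_subset[OF S(2)]) auto
  from dim_kernel_functional[of ?S "l m" s, OF subspace_kernels[OF S(1) l] this l s]
  have "fsp.dim ?S = fsp.dim {x\<in>?S. l m x = 0} + 1" .
  then show ?case unfolding eq using Suc by simp
qed simp

definition pl_index :: "nat \<Rightarrow> nat \<Rightarrow> nat set set" where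
  "pl_index n k = {T. T \<subseteq> {..n} \<and> card T = k + 1}"

definition pl_unit :: "nat set \<Rightarrow> nat set \<Rightarrow> 'a::field" where
  "pl_unit S = (\<lambda>T. if T = S then 1 else 0)"

definition basis_vec :: "nat \<Rightarrow> nat \<Rightarrow> 'a::field" where
  "basis_vec j = (\<lambda>i. if i = j then 1 else 0)"

lemma finite_pl_index [simp]: "finite (pl_index n k)"
  unfolding pl_index_def by (rule finite_subset[of _ "Pow {..n}"]) auto

lemma card_pl_index: "card (pl_index n k) = (n + 1 choose (k + 1))"
  unfolding pl_index_def using n_subsets[of "{..n}" "k + 1"] by simp

lemma pl_index_finite_card:
  assumes "T \<in> pl_index n k"
  shows "finite T" "card T = k + 1" "length (sorted_list_of_set T) = k + 1"
  using assms by (auto simp: pl_index_def intro: finite_subset)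

lemma inj_pl_unit: "inj_on (pl_unit :: nat set \<Rightarrow> nat set \<Rightarrow> 'a::field) A"
  by (rule inj_onI) (metis pl_unit_def zero_neq_one)

lemma pl_space_iff: "x \<in> pl_space n k \<longleftrightarrow> (\<forall>S. S \<notin> pl_index n k \<longrightarrow> x S = 0)"
  unfolding pl_space_def pl_index_def by blast

lemma subspace_pl_space: "fsp.subspace (pl_space n k :: (nat set \<Rightarrow> 'a::field) set)"
  unfolding fsp.subspace_def by (simp add: pl_space_iff fscale_apply)

lemma pl_unit_in_pl_space: "T \<in> pl_index n k \<Longrightarrow> pl_unit T \<in> pl_space n k"
  unfolding pl_space_def pl_index_def pl_unit_def by auto

lemma pl_space_expansion:
  assumes "y \<in> pl_space n k"
  shows "y = (\<Sum>T\<in>pl_index n k. fscale (y T) (pl_unit T))"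
proof
  fix S
  have "(\<Sum>T\<in>pl_index n k. fscale (y T) (pl_unit T)) S = (if S \<in> pl_index n k then y S else 0)"
    by (simp add: sum_fun_apply fscale_apply pl_unit_def if_distrib cong: if_cong)
  then show "y S = (\<Sum>T\<in>pl_index n k. fscale (y T) (pl_unit T)) S"
    using assms by (simp add: pl_space_iff)
qed

lemma pl_space_eq_span:
  "(pl_space n k :: (nat set \<Rightarrow> 'a::field) set) = fsp.span (pl_unit ` pl_index n k)"
proof
  show "(pl_space n k :: (nat set \<Rightarrow> 'a) set) \<subseteq> fsp.span (pl_unit ` pl_index n k)"
  proof
    fix y :: "nat set \<Rightarrow> 'a" assume y: "y \<in> pl_space n k"
    have "(\<Sum>T\<in>pl_index n k. fscale (y T) (pl_unit T)) \<in> fsp.span (pl_unit ` pl_index n k)"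
      by (intro fsp.span_sum fsp.span_scale fsp.span_base) auto
    then show "y \<in> fsp.span (pl_unit ` pl_index n k)" using pl_space_expansion[OF y] by simp
  qed
  show "fsp.span (pl_unit ` pl_index n k) \<subseteq> (pl_space n k :: (nat set \<Rightarrow> 'a) set)"
    by (rule fsp.span_minimal) (auto simp: pl_unit_in_pl_space subspace_pl_space)
qed

lemma independent_pl_units:
  "fsp.independent ((pl_unit :: nat set \<Rightarrow> nat set \<Rightarrow> 'a::field) ` pl_index n k)"
proof
  let ?D = "(pl_unit :: nat set \<Rightarrow> nat set \<Rightarrow> 'a) ` pl_index n k"
  assume "fsp.dependent ?D"
  then obtain u where u: "\<exists>v\<in>?D. u v \<noteq> 0" "(\<Sum>v\<in>?D. fscale (u v) v) = 0"
    using fsp.dependent_finite[of ?D] by auto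
  then obtain T0 where T0: "T0 \<in> pl_index n k" "u (pl_unit T0) \<noteq> 0" by auto
  have "0 = (\<Sum>v\<in>?D. fscale (u v) v) T0" using u(2) by simp
  also have "\<dots> = (\<Sum>v\<in>?D. if v = pl_unit T0 then u v else 0)"
  proof (unfold sum_fun_apply, rule sum.cong[OF refl])
    fix v assume "v \<in> ?D"
    then obtain T where T: "v = pl_unit T" by blast
    then have "v = pl_unit T0 \<longleftrightarrow> T = T0" using inj_pl_unit[of UNIV] by (auto dest: inj_onD)
    then show "fscale (u v) v T0 = (if v = pl_unit T0 then u v else 0)"
      using T by (auto simp: fscale_apply pl_unit_def)
  qed
  also have "\<dots> = u (pl_unit T0)" using T0(1) by simp
  finally show False using T0(2) by simp
qed

lemma dim_pl_space: "fsp.dim (pl_space n k :: (nat set \<Rightarrow> 'a::field) set) = (n + 1 choose (k + 1))"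
  unfolding pl_space_eq_span fsp.dim_span_eq_card_independent[OF independent_pl_units]
  by (simp add: card_image[OF inj_pl_unit] card_pl_index)

lemma finite_dim_pl_space: "finite_dim (pl_space n k)"
  unfolding finite_dim_def pl_space_eq_span by (intro exI[of _ "pl_unit ` pl_index n k"]) simp

lemma subspace_ambient: "fsp.subspace (ambient n :: (nat \<Rightarrow> 'a::field) set)"
  unfolding fsp.subspace_def ambient_def by (simp add: fscale_apply)

lemma basis_vec_in_ambient: "j \<le> n \<Longrightarrow> basis_vec j \<in> ambient n"
  by (auto simp: ambient_def basis_vec_def)

lemma ambient_expansion:
  assumes "v \<in> ambient n"
  shows "v = (\<Sum>j\<le>n. fscale (v j) (basis_vec j))"
proof (rule ext)
  fix i
  have "(\<Sum>j\<le>n. fscale (v j) (basis_vec j)) i = (if i \<le> n then v i else 0)"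
    by (simp add: sum_fun_apply fscale_apply basis_vec_def if_distrib cong: if_cong)
  then show "v i = (\<Sum>j\<le>n. fscale (v j) (basis_vec j)) i"
    using assms by (auto simp: ambient_def)
qed

lemma finite_dim_ambient: "finite_dim (ambient n :: (nat \<Rightarrow> 'a::field) set)"
  unfolding finite_dim_def
proof (intro exI conjI)
  show "ambient n \<subseteq> fsp.span (basis_vec ` {..n} :: (nat \<Rightarrow> 'a) set)"
  proof
    fix v :: "nat \<Rightarrow> 'a" assume "v \<in> ambient n"
    moreover have "(\<Sum>j\<le>n. fscale (v j) (basis_vec j)) \<in> fsp.span (basis_vec ` {..n})"
      by (intro fsp.span_sum fsp.span_scale fsp.span_base) auto
    ultimately show "v \<in> fsp.span (basis_vec ` {..n})" using ambient_expansion by metis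
  qed
qed simp

lemma finite_dim_proj_subspace: "proj_subspace n d U \<Longrightarrow> finite_dim U"
  unfolding proj_subspace_def by (blast intro: finite_dim_subset[OF finite_dim_ambient])

definition wedge_matrix :: "(nat \<Rightarrow> 'a::field) list \<Rightarrow> nat set \<Rightarrow> 'a mat" where
  "wedge_matrix vs S = mat (length vs) (length vs) (\<lambda>(i, j). (vs ! i) (sorted_list_of_set S ! j))"

lemma wedge_eq_det:
  assumes "S \<subseteq> {..n}" "card S = length vs"
  shows "wedge n vs S = det (wedge_matrix vs S)"
proof -
  let ?m = "length vs"
  have "det (wedge_matrix vs S) =
      (\<Sum>p\<in>{p. p permutes {0..<?m}}. signof p * (\<Prod>i = 0..<?m. wedge_matrix vs S $$ (i, p i)))"
    unfolding det_def by (simp add: wedge_matrix_def)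
  also have "\<dots> = (\<Sum>p\<in>{p. p permutes {..<?m}}.
      of_int (sign p) * (\<Prod>i<?m. (vs ! i) (sorted_list_of_set S ! p i)))"
  proof (rule sum.cong)
    fix p assume "p \<in> {p. p permutes {..<?m}}"
    then have "i < ?m \<Longrightarrow> p i < ?m" for i by (metis lessThan_iff mem_Collect_eq permutes_in_image)
    then show "signof p * (\<Prod>i = 0..<?m. wedge_matrix vs S $$ (i, p i))
        = of_int (sign p) * (\<Prod>i<?m. (vs ! i) (sorted_list_of_set S ! p i))"
      by (simp add: wedge_matrix_def lessThan_atLeast0)
  qed (simp add: lessThan_atLeast0)
  finally show ?thesis using assms unfolding wedge_def by simp
qed

lemma wedge_lincomb:
  assumes lw: "length ws = m" and lz: "length zs = m"
    and ws: "\<And>i. i < m \<Longrightarrow> ws ! i = (\<Sum>k<m. fscale (a i k) (zs ! k))"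
  shows "wedge n ws S = det (mat m m (\<lambda>(i, k). a i k)) * wedge n zs S"
proof (cases "S \<subseteq> {..n} \<and> card S = m")
  case False
  then show ?thesis unfolding wedge_def using lw lz by auto
next
  case True
  let ?A = "mat m m (\<lambda>(i, k). a i k)"
  have "wedge_matrix ws S = ?A * wedge_matrix zs S"
  proof (rule eq_matI)
    fix i j assume "i < dim_row (?A * wedge_matrix zs S)" "j < dim_col (?A * wedge_matrix zs S)"
    then have i: "i < m" and j: "j < m" using lz by (auto simp: wedge_matrix_def)
    have "(?A * wedge_matrix zs S) $$ (i, j)
        = (\<Sum>k<m. fscale (a i k) (zs ! k)) (sorted_list_of_set S ! j)"
      using i j lz by (simp add: wedge_matrix_def scalar_prod_def sum_fun_apply fscale_apply
          lessThan_atLeast0)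
    then show "wedge_matrix ws S $$ (i, j) = (?A * wedge_matrix zs S) $$ (i, j)"
      using ws[OF i] i j lw by (simp add: wedge_matrix_def)
  qed (use lw lz in \<open>auto simp: wedge_matrix_def\<close>)
  then have "det (wedge_matrix ws S) = det ?A * det (wedge_matrix zs S)"
    using det_mult[of ?A m "wedge_matrix zs S"] lz by (simp add: wedge_matrix_def)
  then show ?thesis using True wedge_eq_det[of S n ws] wedge_eq_det[of S n zs] lw lz by simp
qed

lemma wedge_in_pl_space: "length vs = k + 1 \<Longrightarrow> wedge n vs \<in> pl_space n k"
  unfolding pl_space_def wedge_def by auto

lemma wedge_multiple_if_subset_span:
  assumes lw: "length ws = m" and lz: "length zs = m" and "distinct zs"
    and "set ws \<subseteq> fsp.span (set zs)"
  shows "\<exists>d. wedge n ws = fscale d (wedge n zs)"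
proof -
  have set_zs: "set zs = (!) zs ` {..<m}" using lz by (auto simp: set_conv_nth)
  have inj: "inj_on ((!) zs) {..<m}" using assms(3) lz by (intro inj_on_nth) auto
  have "\<exists>u. ws ! i = (\<Sum>k<m. fscale (u (zs ! k)) (zs ! k))" if "i < m" for i
  proof -
    have "ws ! i \<in> fsp.span (set zs)" using assms(4) lw that nth_mem by blast
    then obtain u where "ws ! i = (\<Sum>v\<in>set zs. fscale (u v) v)"
      using fsp.span_finite[of "set zs"] by auto
    also have "\<dots> = (\<Sum>k<m. fscale (u (zs ! k)) (zs ! k))"
      unfolding set_zs by (rule sum.reindex[OF inj, unfolded comp_def])
    finally show ?thesis by blast
  qed
  then obtain u where "\<And>i. i < m \<Longrightarrow> ws ! i = (\<Sum>k<m. fscale (u i (zs ! k)) (zs ! k))"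
    by metis
  from wedge_lincomb[OF lw lz this]
  have "wedge n ws = fscale (det (mat m m (\<lambda>(i, k). u i (zs ! k)))) (wedge n zs)"
    by (intro ext) (simp add: fscale_def)
  then show ?thesis by blast
qed

lemma wedge_snoc_eq_0:
  assumes "distinct us" "fsp.independent (set us)" "v \<in> fsp.span (set us)"
  shows "wedge n (us @ [v]) = 0"
proof -
  have "distinct (us @ [0])" using assms(1,2) fsp.dependent_zero by auto
  moreover have "set (us @ [v]) \<subseteq> fsp.span (set (us @ [0]))"
    using assms(3) fsp.span_superset by auto
  ultimately obtain d where "wedge n (us @ [v]) = fscale d (wedge n (us @ [0]))"
    using wedge_multiple_if_subset_span by (metis length_append_singleton)
  moreover have "wedge n (us @ [0]) = 0"
  proof
    fix S
    have "(\<Prod>i<length (us @ [0]). ((us @ [0]) ! i) (sorted_list_of_set S ! p i)) = 0" for p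
      by (rule prod_zero) (auto intro!: bexI[of _ "length us"] simp: nth_append)
    then show "wedge n (us @ [0]) S = 0 S" by (simp add: wedge_def)
  qed
  ultimately show ?thesis by (simp add: fscale_def zero_fun_def)
qed

lemma remove1_nth:
  assumes "distinct xs" "j < length xs"
  shows "remove1 (xs ! j) xs = take j xs @ drop (Suc j) xs"
proof -
  have "xs = take j xs @ xs ! j # drop (Suc j) xs" using assms(2) by (rule id_take_nth_drop)
  moreover have "xs ! j \<notin> set (take j xs)"
    using assms by (metis distinct_take id_take_nth_drop not_distinct_conv_prefix)
  ultimately show ?thesis by (metis remove1.simps(2) remove1_append)
qed

lemma mat_delete_wedge_matrix_snoc:
  assumes lu: "length us = h" and T: "T \<in> pl_index n h" and j: "j < h + 1"
  defines "xs \<equiv> sorted_list_of_set T"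
  shows "mat_delete (wedge_matrix (us @ [v]) T) h j = wedge_matrix us (T - {xs ! j})"
proof (rule eq_matI)
  have lxs: "length xs = h + 1" using pl_index_finite_card[OF T] xs_def by simp
  have rem: "sorted_list_of_set (T - {xs ! j}) = take j xs @ drop (Suc j) xs"
    using sorted_list_of_set_remove[OF pl_index_finite_card(1)[OF T]] remove1_nth[of xs j]
      j lxs xs_def
    by simp
  fix i' j' assume "i' < dim_row (wedge_matrix us (T - {xs ! j}))"
    "j' < dim_col (wedge_matrix us (T - {xs ! j}))"
  then have i': "i' < h" and j': "j' < h" using lu by (auto simp: wedge_matrix_def)
  have "(take j xs @ drop (Suc j) xs) ! j' = xs ! (if j' < j then j' else Suc j')"
    using j j' lxs by (auto simp: nth_append min_def)
  then show "mat_delete (wedge_matrix (us @ [v]) T) h j $$ (i', j')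
      = wedge_matrix us (T - {xs ! j}) $$ (i', j')"
    using i' j' j lu rem xs_def by (simp add: mat_delete_def wedge_matrix_def nth_append)
qed (use lu in \<open>auto simp: wedge_matrix_def mat_delete_def\<close>)

text \<open>The coordinates of \<open>x \<and> v\<close> for \<open>x\<close> with coordinates indexed by \<open>h\<close>-sets and a vector
  \<open>v\<close>: Laplace expansion of the determinant along its last row (see \<open>wedge_snoc\<close>).\<close>

definition ext_prod :: "nat \<Rightarrow> (nat set \<Rightarrow> 'a::field) \<Rightarrow> (nat \<Rightarrow> 'a) \<Rightarrow> nat set \<Rightarrow> 'a" where
  "ext_prod h x v T = (\<Sum>j<h + 1. (-1) ^ (h + j) *
     x (T - {sorted_list_of_set T ! j}) * v (sorted_list_of_set T ! j))"

lemma wedge_snoc: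
  assumes lu: "length us = h" and T: "T \<in> pl_index n h"
  shows "wedge n (us @ [v]) T = ext_prod h (wedge n us) v T"
proof -
  let ?xs = "sorted_list_of_set T"
  let ?A = "wedge_matrix (us @ [v]) T"
  have fT: "finite T" and lxs: "length ?xs = h + 1" and sT: "T \<subseteq> {..n}" "card T = h + 1"
    using pl_index_finite_card[OF T] T by (auto simp: pl_index_def)
  have "wedge n (us @ [v]) T = det ?A" using wedge_eq_det[of T n "us @ [v]"] sT lu by simp
  also have "\<dots> = (\<Sum>j<h + 1. ?A $$ (h, j) * cofactor ?A h j)"
    by (rule laplace_expansion_row) (use lu in \<open>simp_all add: wedge_matrix_def\<close>)
  also have "\<dots> = (\<Sum>j<h + 1. (-1) ^ (h + j) * wedge n us (T - {?xs ! j}) * v (?xs ! j))"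
  proof (rule sum.cong[OF refl])
    fix j assume "j \<in> {..<h + 1}"
    then have j: "j < h + 1" by simp
    have xj: "?xs ! j \<in> T" using j lxs fT by (metis nth_mem set_sorted_list_of_set)
    have "mat_delete ?A h j = wedge_matrix us (T - {?xs ! j})"
      by (rule mat_delete_wedge_matrix_snoc[OF lu T j])
    moreover have "wedge n us (T - {?xs ! j}) = det (wedge_matrix us (T - {?xs ! j}))"
      using wedge_eq_det[of "T - {?xs ! j}" n us] sT xj lu fT by auto
    moreover have "?A $$ (h, j) = v (?xs ! j)" using j lu by (simp add: wedge_matrix_def nth_append)
    ultimately show "?A $$ (h, j) * cofactor ?A h j
        = (-1) ^ (h + j) * wedge n us (T - {?xs ! j}) * v (?xs ! j)"
      by (simp add: cofactor_def)
  qed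
  finally show ?thesis unfolding ext_prod_def .
qed

lemma span_insert_eq_of_dim:
  assumes V: "fsp.subspace V" "finite_dim V" and "B \<subseteq> V" "y \<in> V" "y \<notin> fsp.span B"
    and dim: "fsp.dim V = fsp.dim B + 1"
  shows "fsp.span (insert y B) = V"
proof
  show "fsp.span (insert y B) \<subseteq> V" using assms(3,4) V(1) by (intro fsp.span_minimal) auto
  have fin: "finite_dim (insert y B)" using finite_dim_subset[OF V(2)] assms(3,4) by blast
  have dim_insert: "fsp.dim (insert y B) = fsp.dim V"
    using dim_insert_finite_dim[OF finite_dim_subset[OF V(2) assms(3)] assms(5)] dim by simp
  show "V \<subseteq> fsp.span (insert y B)"
  proof
    fix z assume z: "z \<in> V"
    show "z \<in> fsp.span (insert y B)"
    proof (rule ccontr)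
      assume "z \<notin> fsp.span (insert y B)"
      then have "fsp.dim (insert z (insert y B)) = fsp.dim V + 1"
        using dim_insert_finite_dim[OF fin] dim_insert by simp
      moreover have "fsp.dim (insert z (insert y B)) \<le> fsp.dim V"
        by (rule dim_subset_finite_dim[OF V(2)]) (use z assms(3,4) in auto)
      ultimately show False by simp
    qed
  qed
qed

definition pl_pairing :: "nat \<Rightarrow> nat \<Rightarrow> (nat set \<Rightarrow> 'a::field) \<Rightarrow> (nat set \<Rightarrow> 'a) \<Rightarrow> 'a" where
  "pl_pairing n k c y = (\<Sum>T\<in>pl_index n k. c T * y T)"

lemma module_hom_pl_pairing: "module_hom fscale (*) (pl_pairing n k c)"
  by (rule module_hom_fscale_multI)
    (simp_all add: pl_pairing_def fscale_apply sum.distrib sum_distrib_left algebra_simps)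

lemma subspace_mem_iff_coeff:
  assumes "fsp.subspace H" "y0 \<notin> H" "y - fscale a y0 \<in> H"
  shows "y \<in> H \<longleftrightarrow> a = 0"
proof
  assume "y \<in> H"
  then have "y - (y - fscale a y0) \<in> H" using fsp.subspace_diff assms(1,3) by blast
  then have "fscale a y0 \<in> H" by simp
  then have "fscale (inverse a) (fscale a y0) \<in> H" by (rule fsp.subspace_scale[OF assms(1)])
  then show "a = 0" using assms(2) by (metis fsp.scale_one fsp.scale_scale left_inverse)
qed (use assms(3) in simp)

lemma pl_hyperplane_complement:
  fixes H :: "(nat set \<Rightarrow> 'a::field) set"
  assumes "pl_hyperplane n k H" and "k \<le> n"
  obtains y0 where "y0 \<in> pl_space n k" "y0 \<notin> H" "fsp.span (insert y0 H) = pl_space n k"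
proof -
  let ?P = "pl_space n k :: (nat set \<Rightarrow> 'a) set"
  have H: "fsp.subspace H" "H \<subseteq> ?P" and dim: "fsp.dim ?P = fsp.dim H + 1"
    using assms dim_pl_space[of n k] unfolding pl_hyperplane_def by auto
  have "\<not> ?P \<subseteq> H"
    using dim_subset_finite_dim[OF finite_dim_subset[OF finite_dim_pl_space H(2)], of ?P] dim
    by auto
  then obtain y0 where y0: "y0 \<in> ?P" "y0 \<notin> H" by blast
  have span_H: "fsp.span H = H" using H(1) by simp
  have "y0 \<notin> fsp.span H" unfolding span_H by (rule y0(2))
  then have "fsp.span (insert y0 H) = ?P"
    using span_insert_eq_of_dim[OF subspace_pl_space finite_dim_pl_space H(2) y0(1)] dim by blast
  with y0 that show ?thesis by blast
qed

text \<open>Coefficients \<open>c T\<close> are read off from \<open>e\<^sub>T \<in> H + F y\<^sub>0\<close>, for a fixed \<open>y\<^sub>0 \<notin> H\<close>.\<close>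

lemma pl_hyperplane_eq_kernel:
  fixes H :: "(nat set \<Rightarrow> 'a::field) set"
  assumes hyp: "pl_hyperplane n k H" and "k \<le> n"
  obtains c where "\<And>y. y \<in> pl_space n k \<Longrightarrow> y \<in> H \<longleftrightarrow> pl_pairing n k c y = 0"
    and "\<exists>T\<in>pl_index n k. c T \<noteq> 0"
proof -
  have H: "fsp.subspace H" using hyp unfolding pl_hyperplane_def by simp
  then have span_H: "fsp.span H = H" by simp
  obtain y0 where y0: "y0 \<in> pl_space n k" "y0 \<notin> H" and span: "fsp.span (insert y0 H) = pl_space n k"
    using pl_hyperplane_complement[OF assms] by blast
  have "\<exists>a. pl_unit T - fscale a y0 \<in> H" if "T \<in> pl_index n k" for T
  proof -
    have "pl_unit T \<in> fsp.span (insert y0 H)" using span pl_unit_in_pl_space[OF that] by simp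
    then show ?thesis unfolding fsp.span_breakdown_eq span_H .
  qed
  then obtain c where c: "\<And>T. T \<in> pl_index n k \<Longrightarrow> pl_unit T - fscale (c T) y0 \<in> H" by metis
  have decomp: "y - fscale (pl_pairing n k c y) y0 \<in> H" if y: "y \<in> pl_space n k" for y
  proof -
    have "(\<Sum>T\<in>pl_index n k. fscale (y T) (pl_unit T - fscale (c T) y0)) \<in> H"
      by (intro fsp.subspace_sum[OF H] fsp.subspace_scale[OF H] c)
    moreover have "(\<Sum>T\<in>pl_index n k. fscale (y T) (pl_unit T - fscale (c T) y0))
        = (\<Sum>T\<in>pl_index n k. fscale (y T) (pl_unit T)) - fscale (pl_pairing n k c y) y0"
      by (simp add: fsp.scale_right_diff_distrib sum_subtractf fsp.scale_sum_left pl_pairing_def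
          mult.commute)
    ultimately show ?thesis using pl_space_expansion[OF y] by simp
  qed
  show ?thesis
  proof
    show "y \<in> H \<longleftrightarrow> pl_pairing n k c y = 0" if "y \<in> pl_space n k" for y
      by (rule subspace_mem_iff_coeff[OF H y0(2) decomp[OF that]])
    show "\<exists>T\<in>pl_index n k. c T \<noteq> 0"
    proof (rule ccontr)
      assume "\<not> ?thesis"
      then have "pl_pairing n k c y0 = 0" by (simp add: pl_pairing_def)
      then show False using decomp[OF y0(1)] y0(2) by simp
    qed
  qed
qed

lemma pl_pairing_wedge_snoc:
  "length us = h \<Longrightarrow>
    pl_pairing n h c (wedge n (us @ [v])) = pl_pairing n h c (ext_prod h (wedge n us) v)"
  unfolding pl_pairing_def by (intro sum.cong refl) (simp add: wedge_snoc)

lemma module_hom_pl_pairing_ext_prod_left: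
  "module_hom fscale (*) (\<lambda>x. pl_pairing n h c (ext_prod h x v))"
  by (rule module_hom_fscale_multI)
    (simp_all add: pl_pairing_def ext_prod_def fscale_apply sum.distrib sum_distrib_left
      algebra_simps)

lemma module_hom_pl_pairing_ext_prod_right:
  "module_hom fscale (*) (\<lambda>v. pl_pairing n h c (ext_prod h x v))"
  by (rule module_hom_fscale_multI)
    (simp_all add: pl_pairing_def ext_prod_def fscale_apply sum.distrib sum_distrib_left
      algebra_simps)

lemma pl_pairing_ext_prod_expansion:
  assumes "v \<in> ambient n"
  shows "pl_pairing n h c (ext_prod h x v)
    = (\<Sum>j\<le>n. v j * pl_pairing n h c (ext_prod h x (basis_vec j)))"
proof -
  note hom = module_hom_pl_pairing_ext_prod_right[of n h c x]
  have "pl_pairing n h c (ext_prod h x v)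
      = pl_pairing n h c (ext_prod h x (\<Sum>j\<le>n. fscale (v j) (basis_vec j)))"
    using ambient_expansion[OF assms] by simp
  also have "\<dots> = (\<Sum>j\<le>n. pl_pairing n h c (ext_prod h x (fscale (v j) (basis_vec j))))"
    using module_hom.sum[OF hom, of "\<lambda>j. fscale (v j) (basis_vec j)" "{..n}"] by simp
  also have "\<dots> = (\<Sum>j\<le>n. v j * pl_pairing n h c (ext_prod h x (basis_vec j)))"
    using module_hom.scale[OF hom] by simp
  finally show ?thesis .
qed

definition singular_space :: "nat \<Rightarrow> nat \<Rightarrow> (nat set \<Rightarrow> 'a::field) \<Rightarrow> (nat set \<Rightarrow> 'a) set" where
  "singular_space n h c =
     {x \<in> pl_space n (h - 1). \<forall>j\<le>n. pl_pairing n h c (ext_prod h x (basis_vec j)) = 0}"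

lemma singular_space_eq_kernels:
  "singular_space n h c =
     {x \<in> pl_space n (h - 1). \<forall>j<n + 1. pl_pairing n h c (ext_prod h x (basis_vec j)) = 0}"
  unfolding singular_space_def by (auto simp: less_Suc_eq_le)

lemma subspace_singular_space: "fsp.subspace (singular_space n h c)"
  unfolding singular_space_eq_kernels
  by (rule subspace_kernels[OF subspace_pl_space module_hom_pl_pairing_ext_prod_left])

definition pluecker_basis :: "nat \<Rightarrow> (nat \<Rightarrow> 'a::field) set \<Rightarrow> (nat \<Rightarrow> 'a) list" where
  "pluecker_basis k U = (SOME vs. length vs = k + 1 \<and> distinct vs \<and>
     fsp.independent (set vs) \<and> fsp.span (set vs) = U)"

lemma proj_subspace_basis_exists:
  assumes "proj_subspace n d U"
  shows "\<exists>vs. length vs = d + 1 \<and> distinct vs \<and> fsp.independent (set vs) \<and> fsp.span (set vs) = U"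
proof -
  have U: "fsp.subspace U" "fsp.dim U = d + 1" using assms by (auto simp: proj_subspace_def)
  obtain B where B: "B \<subseteq> U" "fsp.independent B" "U \<subseteq> fsp.span B" "card B = fsp.dim U"
    using fsp.basis_exists by blast
  have "finite B" using B(4) U(2) by (metis card.infinite nat.simps(3) Suc_eq_plus1)
  then obtain vs where vs: "set vs = B" "distinct vs" using finite_distinct_list by blast
  have "length vs = d + 1" using vs B(4) U(2) distinct_card by metis
  moreover have "fsp.span (set vs) = U" using vs B U(1) fsp.span_minimal[of B U] by auto
  ultimately show ?thesis using vs B by blast
qed

lemma pluecker_basis:
  assumes "proj_subspace n d U"
  shows "length (pluecker_basis d U) = d + 1" "distinct (pluecker_basis d U)"
    "fsp.independent (set (pluecker_basis d U))" "fsp.span (set (pluecker_basis d U)) = U"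
  using someI_ex[OF proj_subspace_basis_exists[OF assms]] unfolding pluecker_basis_def by auto

lemma pluecker_subset_iff:
  assumes "fsp.subspace X"
  shows "pluecker n k U \<subseteq> X \<longleftrightarrow> wedge n (pluecker_basis k U) \<in> X"
  unfolding pluecker_def pluecker_basis_def[symmetric]
  using fsp.span_minimal[OF _ assms] fsp.span_base by blast

lemma linear_complex_mem_iff:
  assumes K: "K = {V. proj_subspace n h V \<and> pluecker n h V \<subseteq> H}" and "fsp.subspace H"
    and H: "\<And>y. y \<in> pl_space n h \<Longrightarrow> y \<in> H \<longleftrightarrow> pl_pairing n h c y = 0"
    and V: "proj_subspace n h V"
    and ws: "length ws = h + 1" "distinct ws" "fsp.span (set ws) = V"
  shows "V \<in> K \<longleftrightarrow> pl_pairing n h c (wedge n ws) = 0"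
proof -
  let ?bs = "pluecker_basis h V"
  note bs = pluecker_basis[OF V]
  note scale = module_hom.scale[OF module_hom_pl_pairing]
  have "V \<in> K \<longleftrightarrow> wedge n ?bs \<in> H" using K V pluecker_subset_iff[OF assms(2)] by simp
  also have "\<dots> \<longleftrightarrow> pl_pairing n h c (wedge n ?bs) = 0" by (rule H[OF wedge_in_pl_space[OF bs(1)]])
  finally have K_iff: "V \<in> K \<longleftrightarrow> pl_pairing n h c (wedge n ?bs) = 0" .
  have "set ws \<subseteq> fsp.span (set ?bs)" using fsp.span_superset[of "set ws"] by (simp add: bs(4) ws(3))
  then obtain d where "wedge n ws = fscale d (wedge n ?bs)"
    using wedge_multiple_if_subset_span[OF ws(1) bs(1) bs(2)] by blast
  then have d: "pl_pairing n h c (wedge n ws) = d * pl_pairing n h c (wedge n ?bs)"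
    by (simp add: scale)
  have "set ?bs \<subseteq> fsp.span (set ws)"
    using fsp.span_superset[of "set ?bs"] by (simp add: bs(4) ws(3))
  then obtain d' where "wedge n ?bs = fscale d' (wedge n ws)"
    using wedge_multiple_if_subset_span[OF bs(1) ws(1) ws(2)] by blast
  then have d': "pl_pairing n h c (wedge n ?bs) = d' * pl_pairing n h c (wedge n ws)"
    by (simp add: scale)
  show ?thesis unfolding K_iff using d d' by (metis mult_zero_right)
qed

lemma proj_subspace_span_insert:
  assumes "proj_subspace n d (fsp.span B)" "v \<in> ambient n" "v \<notin> fsp.span B"
  shows "proj_subspace n (d + 1) (fsp.span (insert v B))"
proof -
  have "finite_dim B"
    using finite_dim_subset[OF finite_dim_proj_subspace[OF assms(1)] fsp.span_superset] .
  then have "fsp.dim (insert v B) = fsp.dim B + 1" using assms(3) by (rule dim_insert_finite_dim)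
  moreover have "fsp.span (insert v B) \<subseteq> ambient n"
    using assms(1,2) fsp.span_superset
    by (intro fsp.span_minimal subspace_ambient) (auto simp: proj_subspace_def)
  ultimately show ?thesis using assms(1) by (simp add: proj_subspace_def)
qed

lemma wedge_snoc_vanishes_if_singular:
  fixes K :: "(nat \<Rightarrow> 'a::field) set set"
  assumes K: "K = {V. proj_subspace n h V \<and> pluecker n h V \<subseteq> H}" and "fsp.subspace H"
    and H: "\<And>y. y \<in> pl_space n h \<Longrightarrow> y \<in> H \<longleftrightarrow> pl_pairing n h c y = 0"
    and us: "length us = h" "distinct us" "fsp.independent (set us)"
    and U: "proj_subspace n (h - 1) (fsp.span (set us))" and "1 \<le> h"
    and sing: "singular n h K (fsp.span (set us))" and v: "v \<in> ambient n"
  shows "pl_pairing n h c (wedge n (us @ [v])) = 0"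
proof (cases "v \<in> fsp.span (set us)")
  case True
  then show ?thesis
    using wedge_snoc_eq_0[OF us(2,3)] module_hom.zero[OF module_hom_pl_pairing] by simp
next
  case False
  let ?V = "fsp.span (insert v (set us))"
  have V: "proj_subspace n h ?V" using proj_subspace_span_insert[OF U v False] assms(8) by simp
  moreover have "fsp.span (set us) \<subseteq> ?V" by (rule fsp.span_mono) auto
  ultimately have "?V \<in> K" using sing unfolding singular_def by blast
  moreover have "length (us @ [v]) = h + 1" "distinct (us @ [v])" "fsp.span (set (us @ [v])) = ?V"
    using us False fsp.span_superset by auto
  ultimately show ?thesis using linear_complex_mem_iff[OF K assms(2) H V] by blast
qed

lemma singular_if_wedge_snoc_vanishes:
  fixes K :: "(nat \<Rightarrow> 'a::field) set set"
  assumes K: "K = {V. proj_subspace n h V \<and> pluecker n h V \<subseteq> H}" and "fsp.subspace H"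
    and H: "\<And>y. y \<in> pl_space n h \<Longrightarrow> y \<in> H \<longleftrightarrow> pl_pairing n h c y = 0"
    and us: "length us = h" "distinct us" "fsp.independent (set us)"
    and U: "proj_subspace n (h - 1) (fsp.span (set us))" and "1 \<le> h"
    and vanish: "\<And>v. v \<in> ambient n \<Longrightarrow> pl_pairing n h c (wedge n (us @ [v])) = 0"
  shows "singular n h K (fsp.span (set us))"
  unfolding singular_def
proof (intro conjI allI impI)
  fix V assume "proj_subspace n h V \<and> fsp.span (set us) \<subseteq> V"
  then have V: "proj_subspace n h V" and UV: "fsp.span (set us) \<subseteq> V" by auto
  have dims: "fsp.dim V = fsp.dim (set us) + 1"
    using V U assms(8) fsp.dim_span[of "set us"] by (simp add: proj_subspace_def)
  have "\<not> V \<subseteq> fsp.span (set us)"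
    using dim_subset_finite_dim[OF finite_dim_proj_subspace[OF U], of V] dims by auto
  then obtain v where v: "v \<in> V" "v \<notin> fsp.span (set us)" by blast
  have "fsp.span (set (us @ [v])) = V"
    using span_insert_eq_of_dim[of V "set us" v] V v UV dims fsp.span_superset
      finite_dim_proj_subspace[OF V] by (auto simp: proj_subspace_def)
  moreover have "length (us @ [v]) = h + 1" "distinct (us @ [v])"
    using us v(2) fsp.span_superset by auto
  moreover have "v \<in> ambient n" using V v(1) by (auto simp: proj_subspace_def)
  ultimately show "V \<in> K" using linear_complex_mem_iff[OF K assms(2) H V] vanish by blast
qed (rule U)

lemma singular_iff_pluecker_subset:
  assumes K: "K = {V. proj_subspace n h V \<and> pluecker n h V \<subseteq> H}" and "fsp.subspace H"
    and H: "\<And>y. y \<in> pl_space n h \<Longrightarrow> y \<in> H \<longleftrightarrow> pl_pairing n h c y = 0"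
    and U: "proj_subspace n (h - 1) U" and "1 \<le> h"
  shows "singular n h K U \<longleftrightarrow> pluecker n (h - 1) U \<subseteq> singular_space n h c"
proof -
  let ?x = "wedge n (pluecker_basis (h - 1) U)"
  note basis = pluecker_basis[OF U]
  have len: "length (pluecker_basis (h - 1) U) = h" using basis(1) assms(5) by simp
  have "pluecker n (h - 1) U \<subseteq> singular_space n h c \<longleftrightarrow> ?x \<in> singular_space n h c"
    by (rule pluecker_subset_iff[OF subspace_singular_space])
  also have "\<dots> \<longleftrightarrow> (\<forall>j\<le>n. pl_pairing n h c (ext_prod h ?x (basis_vec j)) = 0)"
    using wedge_in_pl_space[of "pluecker_basis (h - 1) U" "h - 1" n] len assms(5)
    by (simp add: singular_space_def)
  also have "\<dots> \<longleftrightarrow> (\<forall>v\<in>ambient n. pl_pairing n h c (ext_prod h ?x v) = 0)"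
  proof
    assume "\<forall>j\<le>n. pl_pairing n h c (ext_prod h ?x (basis_vec j)) = 0"
    then show "\<forall>v\<in>ambient n. pl_pairing n h c (ext_prod h ?x v) = 0"
      by (simp add: pl_pairing_ext_prod_expansion)
  qed (use basis_vec_in_ambient in blast)
  also have "\<dots> \<longleftrightarrow> (\<forall>v\<in>ambient n. pl_pairing n h c (wedge n (pluecker_basis (h - 1) U @ [v])) = 0)"
    using pl_pairing_wedge_snoc[OF len] by simp
  also have "\<dots> \<longleftrightarrow> singular n h K U"
    using wedge_snoc_vanishes_if_singular[OF K assms(2) H len basis(2,3) _ assms(5)]
      singular_if_wedge_snoc_vanishes[OF K assms(2) H len basis(2,3) _ assms(5)] U
    unfolding basis(4) by blast
  finally show ?thesis by blast
qed

lemma dim_pl_space_pred: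
  "1 \<le> h \<Longrightarrow> fsp.dim (pl_space n (h - 1) :: (nat set \<Rightarrow> 'a::field) set) = (n + 1 choose h)"
  using dim_pl_space[of n "h - 1"] by simp

lemma dim_singular_space_ge:
  fixes c :: "nat set \<Rightarrow> 'a::field"
  assumes "1 \<le> h"
  shows "(n + 1 choose h) \<le> fsp.dim (singular_space n h c) + (n + 1)"
proof -
  have "fsp.dim (pl_space n (h - 1) :: (nat set \<Rightarrow> 'a) set)
      \<le> fsp.dim (singular_space n h c) + (n + 1)"
    unfolding singular_space_eq_kernels
    by (intro dim_le_dim_kernels subspace_pl_space finite_dim_pl_space
        module_hom_pl_pairing_ext_prod_left)
  then show ?thesis using dim_pl_space_pred[OF assms, of n, where 'a='a] by linarith
qed

lemma ext_prod_pl_unit_eq_0: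
  assumes "T \<in> pl_index n h" and "\<not> (t \<in> T \<and> T - {t} = R)"
  shows "ext_prod h (pl_unit R :: nat set \<Rightarrow> 'a::field) (basis_vec t) T = 0"
  unfolding ext_prod_def
proof (rule sum.neutral, rule ballI)
  fix k assume "k \<in> {..<h + 1}"
  then have "sorted_list_of_set T ! k \<in> T"
    using pl_index_finite_card[OF assms(1)] by (metis lessThan_iff nth_mem set_sorted_list_of_set)
  then show "(-1) ^ (h + k) * pl_unit R (T - {sorted_list_of_set T ! k})
      * basis_vec t (sorted_list_of_set T ! k) = (0::'a)"
    using assms(2) by (auto simp: pl_unit_def basis_vec_def)
qed

lemma ext_prod_pl_unit_remove:
  assumes "T \<in> pl_index n h" and i: "i < h + 1"
  defines "t \<equiv> sorted_list_of_set T ! i"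
  shows "ext_prod h (pl_unit (T - {t}) :: nat set \<Rightarrow> 'a::field) (basis_vec t) T = (-1) ^ (h + i)"
proof -
  let ?xs = "sorted_list_of_set T"
  have "?xs ! k = t \<longleftrightarrow> k = i" if "k < h + 1" for k
    using nth_eq_iff_index_eq[of ?xs k i] that i pl_index_finite_card[OF assms(1)] t_def by simp
  then have "ext_prod h (pl_unit (T - {t}) :: nat set \<Rightarrow> 'a) (basis_vec t) T
      = (\<Sum>k<h + 1. if k = i then (-1) ^ (h + i) else 0)"
    unfolding ext_prod_def by (intro sum.cong refl) (auto simp: pl_unit_def basis_vec_def)
  then show ?thesis using i by simp
qed

lemma pl_pairing_ext_prod_pl_unit:
  assumes T0: "T0 \<in> pl_index n h" and i: "i < h + 1" and i': "i' < h + 1"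
  defines "xs \<equiv> sorted_list_of_set T0"
  shows "pl_pairing n h c (ext_prod h (pl_unit (T0 - {xs ! i})) (basis_vec (xs ! i')))
       = (if i' = i then (-1) ^ (h + i) * c T0 else (0::'a::field))"
proof -
  let ?R = "T0 - {xs ! i}"
  let ?t = "xs ! i'"
  have lxs: "length xs = h + 1" using pl_index_finite_card[OF T0] xs_def by simp
  have t: "?t \<in> T0"
    using i' lxs pl_index_finite_card(1)[OF T0] xs_def by (metis nth_mem set_sorted_list_of_set)
  have "c T * ext_prod h (pl_unit ?R) (basis_vec ?t) T
      = (if i' = i \<and> T = T0 then (-1) ^ (h + i) * c T0 else 0)" if T: "T \<in> pl_index n h" for T
  proof (cases "i' = i \<and> T = T0")
    case True
    have "ext_prod h (pl_unit ?R) (basis_vec ?t) T = ((-1) ^ (h + i) :: 'a)"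
      using ext_prod_pl_unit_remove[OF T0 i] True unfolding xs_def by simp
    then show ?thesis using True by simp
  next
    case False
    have "?t \<noteq> xs ! i" if "i' \<noteq> i"
      using that nth_eq_iff_index_eq[of xs i' i] i i' lxs xs_def by simp
    then have "\<not> (?t \<in> T \<and> T - {?t} = ?R)" using False t by blast
    then have "ext_prod h (pl_unit ?R :: nat set \<Rightarrow> 'a) (basis_vec ?t) T = 0"
      by (rule ext_prod_pl_unit_eq_0[OF T])
    then show ?thesis using False by auto
  qed
  then show ?thesis unfolding pl_pairing_def using T0 by (simp add: sum.delta cong: sum.cong)
qed

lemma dim_singular_space_le:
  fixes c :: "nat set \<Rightarrow> 'a::field"
  assumes "1 \<le> h" and T0: "T0 \<in> pl_index n h" "c T0 \<noteq> 0"
  shows "fsp.dim (singular_space n h c) + (h + 1) \<le> (n + 1 choose h)"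
proof -
  let ?P = "pl_space n (h - 1) :: (nat set \<Rightarrow> 'a) set"
  let ?t = "\<lambda>i. sorted_list_of_set T0 ! i"
  let ?l = "\<lambda>j x. pl_pairing n h c (ext_prod h x (basis_vec (?t j)))"
  have t: "?t i \<in> T0" if "i < h + 1" for i
    using that pl_index_finite_card[OF T0(1)] by (metis nth_mem set_sorted_list_of_set)
  have "fsp.dim ?P = fsp.dim {x\<in>?P. \<forall>j<h + 1. ?l j x = 0} + (h + 1)"
  proof (rule dim_kernels_triangular[OF subspace_pl_space finite_dim_pl_space
        module_hom_pl_pairing_ext_prod_left])
    fix i assume i: "i < h + 1"
    let ?s = "pl_unit (T0 - {?t i}) :: nat set \<Rightarrow> 'a"
    have "T0 - {?t i} \<in> pl_index n (h - 1)"
      using T0(1) t[OF i] assms(1) by (auto simp: pl_index_def card_Diff_singleton_if)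
    moreover have "?l j ?s = (if j = i then (-1) ^ (h + i) * c T0 else 0)" if "j < h + 1" for j
      by (rule pl_pairing_ext_prod_pl_unit[OF T0(1) i that])
    ultimately show "\<exists>s\<in>?P. (\<forall>j<i. ?l j s = 0) \<and> ?l i s \<noteq> 0"
      using pl_unit_in_pl_space i T0(2) by (intro bexI[of _ ?s]) auto
  qed
  moreover have "fsp.dim (singular_space n h c) \<le> fsp.dim {x\<in>?P. \<forall>j<h + 1. ?l j x = 0}"
  proof (rule dim_subset_finite_dim)
    show "finite_dim {x\<in>?P. \<forall>j<h + 1. ?l j x = 0}"
      by (rule finite_dim_subset[OF finite_dim_pl_space]) auto
    have "?t j \<le> n" if "j < h + 1" for j using t[OF that] T0(1) by (auto simp: pl_index_def)
    then show "singular_space n h c \<subseteq> {x\<in>?P. \<forall>j<h + 1. ?l j x = 0}"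
      by (auto simp: singular_space_def)
  qed
  ultimately show ?thesis using dim_pl_space_pred[OF assms(1), of n, where 'a='a] by linarith
qed

theorem corollary5p4:
  fixes n h :: nat and K :: "(nat \<Rightarrow> 'a::field) set set"
  assumes "1 \<le> h" and "h \<le> n - 1"
    and "linear_complex n h K"
  shows "\<exists>W :: (nat set \<Rightarrow> 'a) set.
           fsp.subspace W \<and> W \<subseteq> pl_space n (h - 1) \<and>
           int (n + 1 choose h) - int (n + 2) \<le> int (fsp.dim W) - 1 \<and>
           int (fsp.dim W) - 1 \<le> int (n + 1 choose h) - int (h + 2) \<and>
           {U. singular n h K U} = {U. proj_subspace n (h - 1) U \<and> pluecker n (h - 1) U \<subseteq> W}"
proof -
  obtain H :: "(nat set \<Rightarrow> 'a) set" where hyp: "pl_hyperplane n h H"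
    and K: "K = {U. proj_subspace n h U \<and> pluecker n h U \<subseteq> H}"
    using assms(3) unfolding linear_complex_def by blast
  have "h \<le> n" using assms(1,2) by linarith
  obtain c where H: "\<And>y. y \<in> pl_space n h \<Longrightarrow> y \<in> H \<longleftrightarrow> pl_pairing n h c y = 0"
    and "\<exists>T\<in>pl_index n h. c T \<noteq> 0"
    using pl_hyperplane_eq_kernel[OF hyp \<open>h \<le> n\<close>] by blast
  then obtain T0 where T0: "T0 \<in> pl_index n h" "c T0 \<noteq> 0" by blast
  have "fsp.subspace H" using hyp unfolding pl_hyperplane_def by simp
  note singular = singular_iff_pluecker_subset[OF K this H _ assms(1)]
  show ?thesis
  proof (intro exI conjI)
    show "fsp.subspace (singular_space n h c)" by (rule subspace_singular_space)
    show "singular_space n h c \<subseteq> pl_space n (h - 1)" by (auto simp: singular_space_def)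
    show "int (n + 1 choose h) - int (n + 2) \<le> int (fsp.dim (singular_space n h c)) - 1"
      using dim_singular_space_ge[OF assms(1), of n c] by linarith
    show "int (fsp.dim (singular_space n h c)) - 1 \<le> int (n + 1 choose h) - int (h + 2)"
      using dim_singular_space_le[where c = c, OF assms(1) T0] by linarith
    show "{U. singular n h K U} =
        {U. proj_subspace n (h - 1) U \<and> pluecker n (h - 1) U \<subseteq> singular_space n h c}"
      using singular by (auto simp: singular_def)
  qed
qed

end
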